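(* Let $G$ be a connected graph of order $n\geq 9$ with minimum degree $\delta(G)\geq\frac{n-2}{2}$. Then $prc(G)=\chi'(G)$.
   Context: A path in an edge-coloured graph is a rainbow path if its edges receive pairwise distinct colours. The proper rainbow connection number $prc(G)$ of a connected graph is the minimum number of colours in a proper edge-colouring (adjacent edges get distinct colours) such that every two distinct vertices are joined by a rainbow path. $\chi'(G)$ is the chromatic index. *)

theory Defs
  imports Main
begin

definition simple_graph :: "'a set \<Rightarrow> 'a set set \<Rightarrow> bool" where
  "simple_graph V E \<longleftrightarrow> finite V \<and> (\<forall>e\<in>E. e \<subseteq> V \<and> card e = 2)"

definition degree :: "'a set \<Rightarrow> 'a set set \<Rightarrow> 'a \<Rightarrow> nat" where
  "degree V E v = card {u\<in>V. {u, v} \<in> E}"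

definition is_path :: "'a set \<Rightarrow> 'a set set \<Rightarrow> 'a list \<Rightarrow> bool" where
  "is_path V E xs \<longleftrightarrow> xs \<noteq> [] \<and> set xs \<subseteq> V \<and> distinct xs \<and>
     (\<forall>i. Suc i < length xs \<longrightarrow> {xs ! i, xs ! Suc i} \<in> E)"

definition path_edges :: "'a list \<Rightarrow> 'a set list" where
  "path_edges xs = map (\<lambda>i. {xs ! i, xs ! Suc i}) [0..<length xs - 1]"

definition connected_graph :: "'a set \<Rightarrow> 'a set set \<Rightarrow> bool" where
  "connected_graph V E \<longleftrightarrow> V \<noteq> {} \<and>
     (\<forall>u\<in>V. \<forall>v\<in>V. \<exists>xs. is_path V E xs \<and> hd xs = u \<and> last xs = v)"

definition proper_edge_colouring :: "'a set set \<Rightarrow> ('a set \<Rightarrow> nat) \<Rightarrow> bool" where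
  "proper_edge_colouring E c \<longleftrightarrow>
     (\<forall>e\<in>E. \<forall>f\<in>E. e \<noteq> f \<and> e \<inter> f \<noteq> {} \<longrightarrow> c e \<noteq> c f)"

definition rainbow_path :: "'a set \<Rightarrow> 'a set set \<Rightarrow> ('a set \<Rightarrow> nat) \<Rightarrow> 'a list \<Rightarrow> bool" where
  "rainbow_path V E c xs \<longleftrightarrow> is_path V E xs \<and> distinct (map c (path_edges xs))"

definition rainbow_connected :: "'a set \<Rightarrow> 'a set set \<Rightarrow> ('a set \<Rightarrow> nat) \<Rightarrow> bool" where
  "rainbow_connected V E c \<longleftrightarrow>
     (\<forall>u\<in>V. \<forall>v\<in>V. u \<noteq> v \<longrightarrow> (\<exists>xs. rainbow_path V E c xs \<and> hd xs = u \<and> last xs = v))"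

definition chromatic_index :: "'a set set \<Rightarrow> nat" where
  "chromatic_index E = (LEAST k. \<exists>c. proper_edge_colouring E c \<and> c ` E \<subseteq> {..<k})"

definition prc :: "'a set \<Rightarrow> 'a set set \<Rightarrow> nat" where
  "prc V E = (LEAST k. \<exists>c. proper_edge_colouring E c \<and> c ` E \<subseteq> {..<k} \<and> rainbow_connected V E c)"

end

theory Submission
  imports Defs
begin

text \<open>
  If two vertices u, v are at distance at least 3, their neighbourhoods are disjoint, and the
  degree bound forces them to split the remaining n - 2 vertices into two halves of size
  (n - 2)/2 \<ge> 4. A path from u to v leaves N(u) through an edge ab with a \<in> N(u), b \<in> N(v).
  For a proper colouring, u a b v is rainbow unless c(ua) = c(bv); then either a has a second
  neighbour b' in N(v), giving u a b' v, or a has at least two neighbours in N(u), and one of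
  them, w, satisfies c(uw) \<noteq> c(ab), giving the rainbow path u w a b v. Hence every proper
  edge colouring is rainbow connected, so prc and the chromatic index are the same minimum.
\<close>

definition neighbours :: "'a set \<Rightarrow> 'a set set \<Rightarrow> 'a \<Rightarrow> 'a set" where
  "neighbours V E v = {u\<in>V. {u, v} \<in> E}"

lemma degree_eq_card_neighbours: "degree V E v = card (neighbours V E v)"
  unfolding degree_def neighbours_def ..

lemma mem_neighbours_iff: "u \<in> neighbours V E v \<longleftrightarrow> u \<in> V \<and> {v, u} \<in> E"
  unfolding neighbours_def by (auto simp: insert_commute)

lemma finite_neighbours: "simple_graph V E \<Longrightarrow> finite (neighbours V E v)"
  unfolding simple_graph_def neighbours_def by simp

lemma simple_graph_no_loop: "simple_graph V E \<Longrightarrow> {x, x} \<notin> E"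
  unfolding simple_graph_def by force

lemma simple_graph_edge_vertices: "simple_graph V E \<Longrightarrow> {x, y} \<in> E \<Longrightarrow> x \<in> V \<and> y \<in> V"
  unfolding simple_graph_def by blast

lemma proper_edge_colouring_adjacent:
  assumes "proper_edge_colouring E c" "{x, y} \<in> E" "{x, z} \<in> E" "y \<noteq> z"
  shows "c {x, y} \<noteq> c {x, z}"
proof -
  have "{x, y} \<noteq> {x, z}"
    using \<open>y \<noteq> z\<close> by (simp add: doubleton_eq_iff)
  moreover have "{x, y} \<inter> {x, z} \<noteq> {}"
    by simp
  ultimately show ?thesis
    using assms(1-3) unfolding proper_edge_colouring_def by metis
qed

lemma is_path_singleton [simp]: "is_path V E [x] \<longleftrightarrow> x \<in> V"
  unfolding is_path_def by simp

lemma is_path_Cons_Cons [simp]: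
  "is_path V E (x # y # ys) \<longleftrightarrow> x \<in> V \<and> {x, y} \<in> E \<and> x \<notin> set (y # ys) \<and> is_path V E (y # ys)"
  unfolding is_path_def by (auto simp: nth_Cons' less_Suc_eq_0_disj)

lemma path_edges_singleton [simp]: "path_edges [x] = []"
  unfolding path_edges_def by simp

lemma path_edges_Cons_Cons [simp]: "path_edges (x # y # ys) = {x, y} # path_edges (y # ys)"
  unfolding path_edges_def by (simp add: upt_conv_Cons map_Suc_upt[symmetric] del: upt_Suc)

lemma path_leaves_set:
  assumes "is_path V E xs" "hd xs \<in> S" "last xs \<notin> S"
  shows "\<exists>a\<in>S. \<exists>b. b \<notin> S \<and> {a, b} \<in> E"
  using assms
proof (induction xs)
  case Nil
  then show ?case by (simp add: is_path_def)
next
  case (Cons x xs)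
  then show ?case by (cases xs) (auto split: if_splits)
qed

lemma connected_graph_crossing_edge:
  assumes "simple_graph V E" "connected_graph V E" "u \<in> S" "S \<subseteq> V" "v \<in> V - S"
  shows "\<exists>a\<in>S. \<exists>b\<in>V - S. {a, b} \<in> E"
proof -
  obtain xs where xs: "is_path V E xs" "hd xs = u" "last xs = v"
    using assms(2-5) unfolding connected_graph_def by blast
  have "\<exists>a\<in>S. \<exists>b. b \<notin> S \<and> {a, b} \<in> E"
    using assms(3,5) by (intro path_leaves_set[OF xs(1)]) (simp_all add: xs)
  then obtain a b where "a \<in> S" "b \<notin> S" "{a, b} \<in> E"
    by blast
  then show ?thesis
    using simple_graph_edge_vertices[OF assms(1)] by blast
qed

lemma far_pair_neighbourhoods:
  assumes sg: "simple_graph V E" and deg: "\<forall>x\<in>V. 2 * degree V E x + 2 \<ge> card V"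
    and "u \<in> V" "v \<in> V" "u \<noteq> v" "{u, v} \<notin> E"
    and disj: "neighbours V E u \<inter> neighbours V E v = {}"
  shows "neighbours V E u \<union> neighbours V E v = V - {u, v}"
    and "2 * card (neighbours V E u) + 2 = card V"
proof -
  let ?X = "neighbours V E u" and ?Y = "neighbours V E v"
  have "finite V" using sg unfolding simple_graph_def by simp
  have sub: "?X \<union> ?Y \<subseteq> V - {u, v}"
    using assms(3-6) simple_graph_no_loop[OF sg] by (auto simp: mem_neighbours_iff insert_commute)
  have card_XY: "card (?X \<union> ?Y) = card ?X + card ?Y"
    using card_Un_disjoint[OF finite_neighbours[OF sg] finite_neighbours[OF sg] disj] .
  have "card {u, v} \<le> card V"
    using card_mono[OF \<open>finite V\<close>] assms(3,4) by simp
  then have card_rest: "card (V - {u, v}) + 2 = card V"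
    using \<open>finite V\<close> assms(3-5) by (simp add: card_Diff_subset)
  have "2 * card ?X + 2 \<ge> card V" "2 * card ?Y + 2 \<ge> card V"
    using deg assms(3,4) by (simp_all add: degree_eq_card_neighbours)
  moreover have "card (?X \<union> ?Y) \<le> card (V - {u, v})"
    using card_mono[OF _ sub] \<open>finite V\<close> by simp
  ultimately have card_union: "card (?X \<union> ?Y) = card (V - {u, v})"
    using card_XY card_rest by linarith
  then show "?X \<union> ?Y = V - {u, v}"
    using card_subset_eq[OF _ sub] \<open>finite V\<close> by simp
  show "2 * card ?X + 2 = card V"
    using card_union \<open>2 * card ?X + 2 \<ge> card V\<close> \<open>2 * card ?Y + 2 \<ge> card V\<close>
      card_XY card_rest by linarith
qed

lemma far_pair_common_neighbours:
  assumes sg: "simple_graph V E" and deg: "\<forall>x\<in>V. 2 * degree V E x + 2 \<ge> card V"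
    and n9: "card V \<ge> 9"
    and uv: "u \<in> V" "v \<in> V" "u \<noteq> v" "{u, v} \<notin> E"
    and disj: "neighbours V E u \<inter> neighbours V E v = {}"
    and a: "a \<in> neighbours V E u" and a_Y: "neighbours V E a \<inter> neighbours V E v \<subseteq> {b}"
  shows "2 \<le> card (neighbours V E u \<inter> neighbours V E a)"
proof -
  let ?X = "neighbours V E u" and ?Y = "neighbours V E v" and ?A = "neighbours V E a"
  note partition = far_pair_neighbourhoods[OF sg deg uv disj]
  have "a \<notin> ?Y"
    using a disj by blast
  then have "v \<notin> ?A"
    using a by (auto simp: mem_neighbours_iff insert_commute)
  then have "?A \<subseteq> {u, b} \<union> (?X \<inter> ?A)"
    using partition(1) a_Y unfolding neighbours_def by blast
  then have "card ?A \<le> card ({u, b} \<union> (?X \<inter> ?A))"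
    by (intro card_mono) (simp_all add: finite_neighbours[OF sg])
  also have "\<dots> \<le> card {u, b} + card (?X \<inter> ?A)"
    by (rule card_Un_le)
  finally have "card ?A \<le> card {u, b} + card (?X \<inter> ?A)" .
  moreover have "card {u, b} \<le> 2"
    by (simp add: card_insert_le_m1)
  moreover have "2 * card ?A + 2 \<ge> card V"
    using deg a by (simp add: degree_eq_card_neighbours mem_neighbours_iff)
  ultimately show ?thesis
    using partition(2) n9 by linarith
qed

lemma rainbow_path_far_pair:
  assumes sg: "simple_graph V E" and pc: "proper_edge_colouring E c"
    and deg: "\<forall>x\<in>V. 2 * degree V E x + 2 \<ge> card V" and n9: "card V \<ge> 9"
    and uv: "u \<in> V" "v \<in> V" "u \<noteq> v" "{u, v} \<notin> E"
    and disj: "neighbours V E u \<inter> neighbours V E v = {}"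
    and a: "a \<in> neighbours V E u" and b: "b \<in> neighbours V E v" and ab: "{a, b} \<in> E"
  shows "\<exists>xs. rainbow_path V E c xs \<and> hd xs = u \<and> last xs = v"
proof -
  let ?X = "neighbours V E u" and ?Y = "neighbours V E v"
  have "a \<notin> ?Y" "b \<notin> ?X"
    using a b disj by blast+
  then have endpoints: "a \<in> V" "{u, a} \<in> E" "a \<noteq> u" "a \<noteq> v" "a \<notin> ?Y" "b \<notin> ?X"
    using a uv simple_graph_no_loop[OF sg] by (auto simp: mem_neighbours_iff insert_commute)
  have via_Y: "rainbow_path V E c [u, a, b', v]"
    if b': "b' \<in> ?Y" "{a, b'} \<in> E" "c {u, a} \<noteq> c {b', v}" for b'
  proof -
    have "b' \<in> V" "{b', v} \<in> E" "b' \<noteq> u" "b' \<noteq> v" "b' \<noteq> a"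
      using b' endpoints disj uv simple_graph_no_loop[OF sg]
      by (auto simp: mem_neighbours_iff insert_commute)
    moreover have "c {a, u} \<noteq> c {a, b'}" "c {b', a} \<noteq> c {b', v}"
      using b' endpoints calculation
      by (intro proper_edge_colouring_adjacent[OF pc]; simp add: insert_commute)+
    ultimately show ?thesis
      using b' endpoints uv by (auto simp: rainbow_path_def insert_commute)
  qed
  show ?thesis
  proof (cases "c {u, a} = c {b, v}")
    case False
    then show ?thesis using via_Y[OF b ab] by force
  next
    case same_colour: True
    show ?thesis
    proof (cases "\<exists>b'\<in>?Y. b' \<noteq> b \<and> {a, b'} \<in> E")
      case True
      then obtain b' where b': "b' \<in> ?Y" "b' \<noteq> b" "{a, b'} \<in> E" by blast
      have "c {v, b'} \<noteq> c {v, b}"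
        using b' b by (intro proper_edge_colouring_adjacent[OF pc]; simp add: mem_neighbours_iff)
      then have "c {u, a} \<noteq> c {b', v}"
        using same_colour by (simp add: insert_commute)
      then show ?thesis using via_Y[OF b'(1,3)] by force
    next
      case False
      then have "neighbours V E a \<inter> ?Y \<subseteq> {b}"
        by (auto simp: mem_neighbours_iff)
      then have "2 \<le> card (?X \<inter> neighbours V E a)"
        using far_pair_common_neighbours[OF sg deg n9 uv disj a] by blast
      then obtain w1 w2
        where w12: "w1 \<in> ?X \<inter> neighbours V E a" "w2 \<in> ?X \<inter> neighbours V E a" "w1 \<noteq> w2"
        by (metis card_le_Suc_iff numeral_2_eq_2 insertCI)
      have "c {u, w1} \<noteq> c {u, w2}"
        using w12 by (intro proper_edge_colouring_adjacent[OF pc]; simp add: mem_neighbours_iff)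
      then obtain w where w: "w \<in> ?X" "w \<in> neighbours V E a" "c {u, w} \<noteq> c {a, b}"
        using w12 by (metis IntD1 IntD2)
      have "w \<in> V" "{u, w} \<in> E" "{w, a} \<in> E" "{b, v} \<in> E" "b \<in> V"
        "w \<noteq> u" "w \<noteq> a" "w \<noteq> b" "w \<noteq> v" "b \<noteq> u" "b \<noteq> v" "a \<noteq> b"
        using w b disj uv endpoints simple_graph_no_loop[OF sg]
        by (auto simp: mem_neighbours_iff insert_commute)
      moreover have "c {w, u} \<noteq> c {w, a}" "c {a, w} \<noteq> c {a, b}" "c {u, w} \<noteq> c {u, a}"
        "c {a, w} \<noteq> c {a, u}" "c {b, a} \<noteq> c {b, v}"
        using calculation endpoints ab
        by (intro proper_edge_colouring_adjacent[OF pc]; simp add: insert_commute)+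
      ultimately have "rainbow_path V E c [u, w, a, b, v]"
        using w same_colour endpoints ab uv by (auto simp: rainbow_path_def insert_commute)
      then show ?thesis by force
    qed
  qed
qed

lemma proper_edge_colouring_rainbow_connected:
  assumes sg: "simple_graph V E" and cg: "connected_graph V E" and n9: "card V \<ge> 9"
    and deg: "\<forall>x\<in>V. 2 * degree V E x + 2 \<ge> card V" and pc: "proper_edge_colouring E c"
  shows "rainbow_connected V E c"
  unfolding rainbow_connected_def
proof (intro ballI impI)
  fix u v assume uv: "u \<in> V" "v \<in> V" "u \<noteq> v"
  let ?X = "neighbours V E u" and ?Y = "neighbours V E v"
  consider "{u, v} \<in> E" | w where "w \<in> ?X \<inter> ?Y" | "{u, v} \<notin> E" "?X \<inter> ?Y = {}"
    by blast
  then show "\<exists>xs. rainbow_path V E c xs \<and> hd xs = u \<and> last xs = v"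
  proof cases
    case 1
    then have "rainbow_path V E c [u, v]"
      using uv by (simp add: rainbow_path_def)
    then show ?thesis by force
  next
    case (2 w)
    then have "w \<in> V" "{u, w} \<in> E" "{w, v} \<in> E" "w \<noteq> u" "w \<noteq> v"
      using simple_graph_no_loop[OF sg] by (auto simp: mem_neighbours_iff insert_commute)
    moreover have "c {w, u} \<noteq> c {w, v}"
      using calculation uv by (intro proper_edge_colouring_adjacent[OF pc]; simp add: insert_commute)
    ultimately have "rainbow_path V E c [u, w, v]"
      using uv by (auto simp: rainbow_path_def insert_commute)
    then show ?thesis by force
  next
    case 3
    have "?X \<subseteq> V" "u \<notin> ?X"
      using simple_graph_no_loop[OF sg] by (auto simp: mem_neighbours_iff)
    moreover have "v \<notin> insert u ?X"
      using 3 uv by (auto simp: mem_neighbours_iff insert_commute)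
    ultimately obtain a b
      where a: "a \<in> insert u ?X" and b: "b \<in> V - insert u ?X" and ab: "{a, b} \<in> E"
      using connected_graph_crossing_edge[OF sg cg, of u "insert u ?X" v] uv by blast
    have "a \<in> ?X"
      using a b ab by (auto simp: mem_neighbours_iff)
    moreover have "b \<in> ?Y"
    proof -
      have "a \<notin> ?Y"
        using \<open>a \<in> ?X\<close> 3 by blast
      then have "b \<noteq> v"
        using \<open>a \<in> ?X\<close> ab by (auto simp: mem_neighbours_iff insert_commute)
      then show ?thesis
        using b far_pair_neighbourhoods(1)[OF sg deg uv 3] by blast
    qed
    ultimately show ?thesis
      using rainbow_path_far_pair[OF sg pc deg n9 uv 3] ab by blast
  qed
qed

lemma prc_eq_chromatic_index_if_all_rainbow_connected:
  assumes "\<And>c. proper_edge_colouring E c \<Longrightarrow> rainbow_connected V E c"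
  shows "prc V E = chromatic_index E"
  unfolding prc_def chromatic_index_def using assms by metis

theorem proposition5p10:
  fixes V :: "'a set" and E :: "'a set set"
  assumes "simple_graph V E"
    and "connected_graph V E"
    and "card V \<ge> 9"
    and "\<forall>v\<in>V. 2 * degree V E v + 2 \<ge> card V"
  shows "prc V E = chromatic_index E"
  using proper_edge_colouring_rainbow_connected[OF assms]
  by (rule prc_eq_chromatic_index_if_all_rainbow_connected)

end
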